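(* For every command $C$, every store $\sigma$ and every expectation $f$: (1) $\mathsf{ec}[C](\sigma)\le\mathsf{ect}[C](\mathbf{0})(\sigma)$; (2) $\mathsf{ev}[C](\sigma)(f)\le\mathsf{evt}[C](f)(\sigma)$.
   Context: Let $\mathrm{Var}$ be a finite set of integer-valued variables and $\Sigma = \mathrm{Var}\to\mathbb{Z}$ the set of stores; $\sigma[x\mapsto i]$ is the store updated at $x$. Boolean expressions $\varphi$ are evaluated on stores ($\sigma\models\varphi$). A distribution expression $d$ assigns to each store $\sigma$ a probability distribution $d(\sigma)$ on $\mathbb{Z}$. Commands: $C,D ::= \mathtt{skip} \mid \mathtt{tick}(r) \mid \mathtt{halt} \mid x :\approx d \mid \mathtt{if}_{[\psi]}(\varphi)\{C\}\{D\} \mid \mathtt{while}_{[\psi]}(\varphi)\{C\} \mid C \,\square\, D \mid C \oplus_p D \mid C;D$, with $r$ a nonnegative rational, $p\in[0,1]$. Expectations are functions $f:\Sigma\to[0,\infty]$, with pointwise operations, $\mathbf{r}$ the constant $r$ (so $\mathbf{0}$ is the zero function), $[\varphi](\sigma)\in\{0,1\}$ the indicator, $[c]=1$ if $c=\mathit{true}$ and $0$ otherwise, $0\cdot\infty=0$. Transformer $\mathsf{et}_c$ for $c\in\{\mathit{true},\mathit{false}\}$: $\mathsf{et}_c[\mathtt{skip}](f)=f$; $\mathsf{et}_c[\mathtt{tick}(r)](f)=[c]\cdot\mathbf{r}+f$; $\mathsf{et}_c[\mathtt{halt}](f)=\mathbf{0}$; $\mathsf{et}_c[x:\approx d](f)=\lambda\sigma.\sum_{i}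 d(\sigma)(i)\, f(\sigma[x\mapsto i])$; $\mathsf{et}_c[\mathtt{if}_{[\psi]}(\varphi)\{C\}\{D\}](f)=[\psi\wedge\varphi]\cdot\mathsf{et}_c[C](f)+[\psi\wedge\neg\varphi]\cdot\mathsf{et}_c[D](f)$; $\mathsf{et}_c[\mathtt{while}_{[\psi]}(\varphi)\{C\}](f)=\mathrm{lfp}\,F.\ [\psi\wedge\varphi]\cdot\mathsf{et}_c[C](F)+[\psi\wedge\neg\varphi]\cdot f$ (least fixed point, pointwise order); $\mathsf{et}_c[C\,\square\,D](f)=\max(\mathsf{et}_c[C](f),\mathsf{et}_c[D](f))$; $\mathsf{et}_c[C\oplus_p D](f)=\mathbf{p}\cdot\mathsf{et}_c[C](f)+\mathbf{(1-p)}\cdot\mathsf{et}_c[D](f)$; $\mathsf{et}_c[C;D](f)=\mathsf{et}_c[C](\mathsf{et}_c[D](f))$. Set $\mathsf{ect}[C]=\mathsf{et}_{\mathit{true}}[C]$ and $\mathsf{evt}[C]=\mathsf{et}_{\mathit{false}}[C]$. Configurations: $\mathrm{Conf}=(\mathrm{Cmd}\times\Sigma)\cup\Sigma\cup\{\bot\}$; an active configuration is written $\langle C,\sigma\rangle$. A multidistribution on a set $A$ is a countable multiset $\mu$ of pairs $q:a$ with $a\in A$, $0<q\le1$, and $\sum_{q:a\in\mu}q\le1$; $\mathbb{E}_\mu(g)=\sum_{q:a\in\mu}q\cdot g(a)$ (with multiplicity); the restriction $\mu|_P$ to $P\subseteq A$ keeps exactly the entries $q:a$ with $a\in P$. For $0<p\le1$,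 $p\cdot\{q_i:a_i\}_i=\{p q_i:a_i\}_i$, and for a countable family with $p_i>0$, $\sum_ip_i\le1$, $\biguplus_i p_i\cdot\mu_i$ is the multiset union of the $p_i\cdot\mu_i$. For $h:A\to B$, $\overline h(\{q_i:a_i\}_i)=\{q_i:h(a_i)\}_i$. A configuration $\gamma$ is identified with $\{1:\gamma\}$; entries with probability $0$ are omitted. The one-step relation $\gamma\to_w\mu$ is the least relation closed under: $\langle\mathtt{skip},\sigma\rangle\to_0\sigma$; $\langle\mathtt{tick}(r),\sigma\rangle\to_r\sigma$; $\langle\mathtt{halt},\sigma\rangle\to_0\bot$; $\langle x:\approx d,\sigma\rangle\to_0\{d(\sigma)(i):\sigma[x\mapsto i]\mid d(\sigma)(i)>0\}$; $\langle\mathtt{if}_{[\psi]}(\varphi)\{C\}\{D\},\sigma\rangle\to_0\langle C,\sigma\rangle$ if $\sigma\models\psi\wedge\varphi$, $\to_0\langle D,\sigma\rangle$ if $\sigma\models\psi\wedge\neg\varphi$, $\to_0\bot$ if $\sigma\models\neg\psi$; $\langle\mathtt{while}_{[\psi]}(\varphi)\{C\},\sigma\rangle\to_0\langle C;\mathtt{while}_{[\psi]}(\varphi)\{C\},\sigma\rangle$ if $\sigma\models\psi\wedge\varphi$, $\to_0\sigma$ if $\sigma\models\psi\wedge\neg\varphi$, $\to_0\bot$ if $\sigma\models\neg\psi$; $\langle C\,\square\,D,\sigma\rangle\to_0\langle C,\sigma\rangle$ and $\to_0\langle D,\sigma\rangle$; $\langle C\oplus_pD,\sigma\rangle\to_0\{p:\langle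 C,\sigma\rangle,1-p:\langle D,\sigma\rangle\}$; if $\langle C,\sigma\rangle\to_r\mu$ then $\langle C;D,\sigma\rangle\to_r\overline{\kappa_D}(\mu)$, where $\kappa_D(\langle C',\sigma'\rangle)=\langle C';D,\sigma'\rangle$, $\kappa_D(\sigma')=\langle D,\sigma'\rangle$, $\kappa_D(\bot)=\bot$. The lifted relation $\mu\Rightarrow_w\nu$ on multidistributions is the least relation with: $\mu\Rightarrow_0\mu$; $\{1:\gamma\}\Rightarrow_w\mu$ whenever $\gamma\to_w\mu$; and if $\mu_i\Rightarrow_{w_i}\nu_i$ for all $i$ in a countable index set $I$, $p_i>0$, $\sum_ip_i\le1$, then $\biguplus_ip_i\cdot\mu_i\Rightarrow_{w}\biguplus_ip_i\cdot\nu_i$ with $w=\sum_ip_iw_i$. The multi-step relation $\Rightarrow^w$ is the least relation with: $\mu\Rightarrow^0\mu$; $\mu\Rightarrow^w\nu$ whenever $\mu\Rightarrow_w\nu$; and $\mu\Rightarrow^{w_1+w_2}\nu$ whenever $\mu\Rightarrow^{w_1}\mu'$ and $\mu'\Rightarrow^{w_2}\nu$. The expected cost function is $\mathsf{ec}[C](\sigma)=\sup\{w\mid \{1:\langle C,\sigma\rangle\}\Rightarrow^w\mu\text{ for some }\mu\}$ and the expected value function is $\mathsf{ev}[C](\sigma)(f)=\sup\{\mathbb{E}_{\mu|_\Sigma}(f)\mid \{1:\langle C,\sigma\rangle\}\Rightarrow^w\mu\text{ for some }w,\mu\}$. *)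

theory Defs
  imports "HOL-Probability.Probability"
begin

type_synonym 'v store = "'v \<Rightarrow> int"
type_synonym 'v bexp = "'v store \<Rightarrow> bool"
type_synonym 'v dexp = "'v store \<Rightarrow> int pmf"
type_synonym 'v expec = "'v store \<Rightarrow> ennreal"

datatype 'v cmd =
    Skip
  | Tick rat
  | Halt
  | Sample 'v "'v dexp"
  | If "'v bexp" "'v bexp" "'v cmd" "'v cmd"
  | While "'v bexp" "'v bexp" "'v cmd"
  | NDet "'v cmd" "'v cmd"
  | PChoice "'v cmd" real "'v cmd"
  | Seq "'v cmd" "'v cmd"

primrec wf_cmd :: "'v cmd \<Rightarrow> bool" where
  "wf_cmd Skip = True"
| "wf_cmd (Tick r) = (0 \<le> r)"
| "wf_cmd Halt = True"
| "wf_cmd (Sample x d) = True"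
| "wf_cmd (If psi phi C D) = (wf_cmd C \<and> wf_cmd D)"
| "wf_cmd (While psi phi C) = wf_cmd C"
| "wf_cmd (NDet C D) = (wf_cmd C \<and> wf_cmd D)"
| "wf_cmd (PChoice C p D) = (0 \<le> p \<and> p \<le> 1 \<and> wf_cmd C \<and> wf_cmd D)"
| "wf_cmd (Seq C D) = (wf_cmd C \<and> wf_cmd D)"

definition ind :: "bool \<Rightarrow> ennreal" where
  "ind b = (if b then 1 else 0)"

primrec et :: "bool \<Rightarrow> 'v cmd \<Rightarrow> 'v expec \<Rightarrow> 'v expec" where
  "et c Skip f = f"
| "et c (Tick r) f = (\<lambda>\<sigma>. ind c * ennreal (of_rat r) + f \<sigma>)"
| "et c Halt f = (\<lambda>\<sigma>. 0)"
| "et c (Sample x d) f = (\<lambda>\<sigma>. \<integral>\<^sup>+ i. f (\<sigma>(x := i)) \<partial>measure_pmf (d \<sigma>))"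
| "et c (If psi phi C D) f =
     (\<lambda>\<sigma>. ind (psi \<sigma> \<and> phi \<sigma>) * et c C f \<sigma> + ind (psi \<sigma> \<and> \<not> phi \<sigma>) * et c D f \<sigma>)"
| "et c (While psi phi C) f =
     lfp (\<lambda>F \<sigma>. ind (psi \<sigma> \<and> phi \<sigma>) * et c C F \<sigma> + ind (psi \<sigma> \<and> \<not> phi \<sigma>) * f \<sigma>)"
| "et c (NDet C D) f = (\<lambda>\<sigma>. max (et c C f \<sigma>) (et c D f \<sigma>))"
| "et c (PChoice C p D) f = (\<lambda>\<sigma>. ennreal p * et c C f \<sigma> + ennreal (1 - p) * et c D f \<sigma>)"
| "et c (Seq C D) f = et c C (et c D f)"

definition ect :: "'v cmd \<Rightarrow> 'v expec \<Rightarrow> 'v expec" where "ect = et True"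
definition evt :: "'v cmd \<Rightarrow> 'v expec \<Rightarrow> 'v expec" where "evt = et False"

datatype 'v conf = Act "'v cmd" "'v store" | Fin "'v store" | Bot

text \<open>A (countable) multiset of pairs q:a is represented by its multiplicity function.\<close>
type_synonym 'a mdist = "real \<times> 'a \<Rightarrow> nat"

definition mweight :: "'a mdist \<Rightarrow> ennreal" where
  "mweight \<mu> = (\<integral>\<^sup>+ x. ennreal (fst x) * of_nat (\<mu> x) \<partial>count_space UNIV)"

definition is_mdist :: "'a mdist \<Rightarrow> bool" where
  "is_mdist \<mu> \<longleftrightarrow> (\<forall>x. \<mu> x \<noteq> 0 \<longrightarrow> 0 < fst x \<and> fst x \<le> 1) \<and> mweight \<mu> \<le> 1"

definition expect :: "'a mdist \<Rightarrow> ('a \<Rightarrow> ennreal) \<Rightarrow> ennreal" where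
  "expect \<mu> g = (\<integral>\<^sup>+ x. ennreal (fst x) * of_nat (\<mu> x) * g (snd x) \<partial>count_space UNIV)"

definition restrict_md :: "'a mdist \<Rightarrow> 'a set \<Rightarrow> 'a mdist" where
  "restrict_md \<mu> P = (\<lambda>x. if snd x \<in> P then \<mu> x else 0)"

definition mpoint :: "real \<Rightarrow> 'a \<Rightarrow> 'a mdist" where
  "mpoint q a = (\<lambda>x. if x = (q, a) \<and> 0 < q then 1 else 0)"

definition madd :: "'a mdist \<Rightarrow> 'a mdist \<Rightarrow> 'a mdist" where
  "madd \<mu> \<nu> = (\<lambda>x. \<mu> x + \<nu> x)"

text \<open>p \<cdot> \<mu> for p > 0: entries q:a become (p q):a.\<close>
definition mscale :: "real \<Rightarrow> 'a mdist \<Rightarrow> 'a mdist" where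
  "mscale p \<mu> = (\<lambda>x. \<mu> (fst x / p, snd x))"

text \<open>Multiset union of a countable family (finitely many summands contribute to each entry
  whenever the family consists of multidistributions weighted by p_i > 0 with sum p_i \<le> 1).\<close>
definition munion :: "nat set \<Rightarrow> (nat \<Rightarrow> 'a mdist) \<Rightarrow> 'a mdist" where
  "munion I \<mu> = (\<lambda>x. \<Sum>i \<in> {i \<in> I. \<mu> i x \<noteq> 0}. \<mu> i x)"

definition mmap :: "('a \<Rightarrow> 'b) \<Rightarrow> 'a mdist \<Rightarrow> 'b mdist" where
  "mmap h \<mu> = (\<lambda>x. \<Sum>a \<in> {a. h a = snd x \<and> \<mu> (fst x, a) \<noteq> 0}. \<mu> (fst x, a))"

definition msample :: "'v store \<Rightarrow> 'v \<Rightarrow> 'v dexp \<Rightarrow> 'v conf mdist" where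
  "msample \<sigma> x d = (\<lambda>y. if 0 < fst y \<and> (\<exists>i. snd y = Fin (\<sigma>(x := i)) \<and> fst y = pmf (d \<sigma>) i)
                        then 1 else 0)"

fun kappa :: "'v cmd \<Rightarrow> 'v conf \<Rightarrow> 'v conf" where
  "kappa D (Act C' \<sigma>') = Act (Seq C' D) \<sigma>'"
| "kappa D (Fin \<sigma>') = Act D \<sigma>'"
| "kappa D Bot = Bot"

inductive step :: "'v conf \<Rightarrow> ennreal \<Rightarrow> 'v conf mdist \<Rightarrow> bool" where
  skip: "step (Act Skip \<sigma>) 0 (mpoint 1 (Fin \<sigma>))"
| tick: "step (Act (Tick r) \<sigma>) (ennreal (of_rat r)) (mpoint 1 (Fin \<sigma>))"
| halt: "step (Act Halt \<sigma>) 0 (mpoint 1 Bot)"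
| sample: "step (Act (Sample x d) \<sigma>) 0 (msample \<sigma> x d)"
| if_t: "psi \<sigma> \<and> phi \<sigma> \<Longrightarrow> step (Act (If psi phi C D) \<sigma>) 0 (mpoint 1 (Act C \<sigma>))"
| if_f: "psi \<sigma> \<and> \<not> phi \<sigma> \<Longrightarrow> step (Act (If psi phi C D) \<sigma>) 0 (mpoint 1 (Act D \<sigma>))"
| if_bot: "\<not> psi \<sigma> \<Longrightarrow> step (Act (If psi phi C D) \<sigma>) 0 (mpoint 1 Bot)"
| while_t: "psi \<sigma> \<and> phi \<sigma> \<Longrightarrow>
     step (Act (While psi phi C) \<sigma>) 0 (mpoint 1 (Act (Seq C (While psi phi C)) \<sigma>))"
| while_f: "psi \<sigma> \<and> \<not> phi \<sigma> \<Longrightarrow> step (Act (While psi phi C) \<sigma>) 0 (mpoint 1 (Fin \<sigma>))"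
| while_bot: "\<not> psi \<sigma> \<Longrightarrow> step (Act (While psi phi C) \<sigma>) 0 (mpoint 1 Bot)"
| ndet_l: "step (Act (NDet C D) \<sigma>) 0 (mpoint 1 (Act C \<sigma>))"
| ndet_r: "step (Act (NDet C D) \<sigma>) 0 (mpoint 1 (Act D \<sigma>))"
| pchoice: "step (Act (PChoice C p D) \<sigma>) 0 (madd (mpoint p (Act C \<sigma>)) (mpoint (1 - p) (Act D \<sigma>)))"
| seq: "step (Act C \<sigma>) r \<mu> \<Longrightarrow> step (Act (Seq C D) \<sigma>) r (mmap (kappa D) \<mu>)"

text \<open>Lifted one-step relation; countable index sets are subsets of nat.\<close>
inductive lstep :: "'v conf mdist \<Rightarrow> ennreal \<Rightarrow> 'v conf mdist \<Rightarrow> bool" where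
  refl: "is_mdist \<mu> \<Longrightarrow> lstep \<mu> 0 \<mu>"
| single: "step \<gamma> w \<mu> \<Longrightarrow> lstep (mpoint 1 \<gamma>) w \<mu>"
| union: "\<lbrakk> \<forall>i\<in>I. lstep (\<mu> i) (w i) (\<nu> i); \<forall>i\<in>I. 0 < p i;
           (\<integral>\<^sup>+ i. ennreal (p i) \<partial>count_space I) \<le> 1 \<rbrakk> \<Longrightarrow>
         lstep (munion I (\<lambda>i. mscale (p i) (\<mu> i)))
               (\<integral>\<^sup>+ i. ennreal (p i) * w i \<partial>count_space I)
               (munion I (\<lambda>i. mscale (p i) (\<nu> i)))"

inductive msteps :: "'v conf mdist \<Rightarrow> ennreal \<Rightarrow> 'v conf mdist \<Rightarrow> bool" where
  refl: "msteps \<mu> 0 \<mu>"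
| single: "lstep \<mu> w \<nu> \<Longrightarrow> msteps \<mu> w \<nu>"
| trans: "msteps \<mu> w1 \<mu>' \<Longrightarrow> msteps \<mu>' w2 \<nu> \<Longrightarrow> msteps \<mu> (w1 + w2) \<nu>"

definition ec :: "'v cmd \<Rightarrow> 'v store \<Rightarrow> ennreal" where
  "ec C \<sigma> = Sup {w. \<exists>\<mu>. msteps (mpoint 1 (Act C \<sigma>)) w \<mu>}"

definition ev :: "'v cmd \<Rightarrow> 'v store \<Rightarrow> 'v expec \<Rightarrow> ennreal" where
  "ev C \<sigma> f = Sup {expect (restrict_md \<mu> (range Fin)) (\<lambda>c. case c of Fin \<tau> \<Rightarrow> f \<tau> | _ \<Rightarrow> 0)
                   | \<mu>. \<exists>w. msteps (mpoint 1 (Act C \<sigma>)) w \<mu>}"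

end

theory Submission
  imports Defs
begin

text \<open>Extend the transformer to configurations by letting \<open>\<langle>C,\<sigma>\<rangle>\<close> be worth
  \<open>et c C h \<sigma>\<close>, a final store \<open>\<tau>\<close> be worth \<open>h \<tau>\<close> and \<open>\<bottom>\<close> be worth nothing. Along every
  reduction of cost \<open>w\<close> from \<open>\<mu>\<close> to \<open>\<nu>\<close> this potential pays for the cost:
  \<open>[c] w + E\<^sub>\<nu>(potential) \<le> E\<^sub>\<mu>(potential)\<close>. For a single step this is the defining
  equation of \<open>et\<close> (for loops only the fixed-point equation of the least fixed point is used).
  The inequality survives countable convex combinations because the expectation of a weighted
  multiset union is the weighted sum of the expectations; on the starting side this needs
  each entry of the union to come from finitely many summands, which holds since all weights
  lie in \<open>(0,1]\<close> and the mixing weights sum to at most 1. Composing along multi-step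
  reductions from \<open>1:\<langle>C,\<sigma>\<rangle>\<close> and discarding the nonnegative potential of the reached
  multidistribution gives both bounds.\<close>

lemma et_mono: "mono (et c C)"
proof (induction C)
  case (Sample x d)
  show ?case by (auto intro!: monoI le_funI nn_integral_mono dest: le_funD)
next
  case (If psi phi C D)
  then show ?case
    by (auto intro!: monoI le_funI add_mono mult_left_mono dest: le_funD monoD)
next
  case (While psi phi C)
  show ?case
  proof (rule monoI)
    fix x y :: "'a expec"
    assume "x \<le> y"
    then show "et c (While psi phi C) x \<le> et c (While psi phi C) y"
      unfolding et.simps
      by (intro lfp_mono) (auto intro!: le_funI add_mono mult_left_mono dest: le_funD)
  qed
next
  case (NDet C D)
  then show ?case
    by (auto intro!: monoI le_funI max.mono dest: le_funD monoD)
next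
  case (PChoice C p D)
  then show ?case
    by (auto intro!: monoI le_funI add_mono mult_left_mono dest: le_funD monoD)
next
  case (Seq C D)
  then show ?case
    by (auto intro!: monoI dest: monoD)
qed (auto intro!: monoI le_funI add_mono dest: le_funD)

lemma et_While_unfold:
  "et c (While psi phi C) f =
     (\<lambda>\<sigma>. ind (psi \<sigma> \<and> phi \<sigma>) * et c C (et c (While psi phi C) f) \<sigma> + ind (psi \<sigma> \<and> \<not> phi \<sigma>) * f \<sigma>)"
proof -
  have "mono (\<lambda>F \<sigma>. ind (psi \<sigma> \<and> phi \<sigma>) * et c C F \<sigma> + ind (psi \<sigma> \<and> \<not> phi \<sigma>) * f \<sigma>)"
    using et_mono[of c C]
    by (auto intro!: monoI le_funI add_mono mult_left_mono dest: le_funD monoD)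
  then show ?thesis
    by (simp only: et.simps) (rule lfp_unfold)
qed

lemma nn_integral_indicator_inj_image:
  assumes "inj_on K A"
  shows "(\<integral>\<^sup>+ y. F y * indicator (K ` A) y \<partial>count_space UNIV) = (\<integral>\<^sup>+ i. F (K i) \<partial>count_space A)"
proof -
  have "(\<integral>\<^sup>+ i. F (K i) \<partial>count_space A) = (\<integral>\<^sup>+ y. F y \<partial>count_space (K ` A))"
    using assms by (intro nn_integral_bij_count_space) (simp add: bij_betw_def)
  then show ?thesis
    by (simp add: nn_integral_count_space_indicator)
qed

lemma nn_integral_count_space_nat_swap:
  fixes \<phi> :: "nat \<Rightarrow> 'b \<Rightarrow> ennreal"
  shows "(\<integral>\<^sup>+ x. (\<integral>\<^sup>+ i. \<phi> i x \<partial>count_space I) \<partial>count_space UNIV)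
       = (\<integral>\<^sup>+ i. (\<integral>\<^sup>+ x. \<phi> i x \<partial>count_space UNIV) \<partial>count_space I)"
proof -
  have as_suminf: "(\<integral>\<^sup>+ i. \<psi> i \<partial>count_space I) = (\<Sum>i. \<psi> i * indicator I i)" for \<psi> :: "nat \<Rightarrow> ennreal"
    by (simp add: nn_integral_count_space_indicator nn_integral_count_space_nat)
  have "(\<integral>\<^sup>+ x. (\<Sum>i. \<phi> i x * indicator I i) \<partial>count_space UNIV)
      = (\<Sum>i. (\<integral>\<^sup>+ x. \<phi> i x \<partial>count_space UNIV) * indicator I i)"
    by (simp add: nn_integral_suminf nn_integral_multc)
  then show ?thesis
    by (simp add: as_suminf)
qed

lemma expect_mpoint: "expect (mpoint q a) g = (if 0 < q then ennreal q * g a else 0)"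
proof (cases "0 < q")
  case True
  have "expect (mpoint q a) g = (\<integral>\<^sup>+ x. (ennreal q * g a) * indicator {(q, a)} x \<partial>count_space UNIV)"
    unfolding expect_def mpoint_def
    by (intro nn_integral_cong) (auto simp: indicator_def True)
  with True show ?thesis
    by (simp add: nn_integral_cmult_indicator)
qed (simp add: expect_def mpoint_def)

lemma expect_mpoint_le: "expect (mpoint q a) g \<le> ennreal q * g a"
  by (simp add: expect_mpoint)

lemma expect_madd: "expect (madd \<mu> \<nu>) g = expect \<mu> g + expect \<nu> g"
  unfolding expect_def madd_def
  by (subst nn_integral_add[symmetric]) (auto intro!: nn_integral_cong simp: distrib_left distrib_right)

lemma expect_mscale:
  assumes "0 < p"
  shows "expect (mscale p \<mu>) g = ennreal p * expect \<mu> g"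
proof -
  let ?S = "\<lambda>y::real \<times> 'a. (p * fst y, snd y)"
  have "bij_betw ?S UNIV UNIV"
    using assms by (intro bij_betw_byWitness[where f'="\<lambda>y. (fst y / p, snd y)"]) auto
  have "expect (mscale p \<mu>) g =
      (\<integral>\<^sup>+ x. ennreal (fst x) * of_nat (\<mu> (fst x / p, snd x)) * g (snd x) \<partial>count_space UNIV)"
    unfolding expect_def mscale_def by simp
  also have "\<dots> = (\<integral>\<^sup>+ y. ennreal (fst (?S y)) * of_nat (\<mu> (fst (?S y) / p, snd (?S y))) * g (snd (?S y))
      \<partial>count_space UNIV)"
    by (rule nn_integral_bij_count_space[OF \<open>bij_betw ?S UNIV UNIV\<close>, symmetric])
  also have "\<dots> = (\<integral>\<^sup>+ y. ennreal p * (ennreal (fst y) * of_nat (\<mu> y) * g (snd y)) \<partial>count_space UNIV)"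
    using assms by (intro nn_integral_cong) (auto simp: ennreal_mult' mult.assoc)
  also have "\<dots> = ennreal p * expect \<mu> g"
    unfolding expect_def by (simp add: nn_integral_cmult)
  finally show ?thesis .
qed

lemma mmap_inj:
  assumes "inj k"
  shows "mmap k \<mu> = (\<lambda>x. if snd x \<in> range k then \<mu> (fst x, inv k (snd x)) else 0)"
proof
  fix x :: "real \<times> 'b"
  show "mmap k \<mu> x = (if snd x \<in> range k then \<mu> (fst x, inv k (snd x)) else 0)"
  proof (cases "snd x \<in> range k")
    case True
    then obtain a where a: "snd x = k a" by auto
    then have "{b. k b = snd x \<and> \<mu> (fst x, b) \<noteq> 0} = (if \<mu> (fst x, a) \<noteq> 0 then {a} else {})"
      using assms by (auto simp: inj_def)
    with True a assms show ?thesis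
      unfolding mmap_def by auto
  next
    case False
    then have "{b. k b = snd x \<and> \<mu> (fst x, b) \<noteq> 0} = {}"
      by (metis (mono_tags, lifting) empty_Collect_eq rangeI)
    with False show ?thesis
      unfolding mmap_def by simp
  qed
qed

lemma expect_mmap:
  assumes "inj k"
  shows "expect (mmap k \<mu>) g = expect \<mu> (g \<circ> k)"
proof -
  let ?K = "\<lambda>y. (fst y, k (snd y))"
  have "inj ?K" using assms by (auto simp: inj_def)
  have "expect (mmap k \<mu>) g = (\<integral>\<^sup>+ x. (ennreal (fst x) * of_nat (\<mu> (fst x, inv k (snd x))) * g (snd x))
           * indicator (range ?K) x \<partial>count_space UNIV)"
    unfolding expect_def mmap_inj[OF assms]
    by (intro nn_integral_cong) (auto simp: indicator_def image_iff)
  also have "\<dots> = expect \<mu> (g \<circ> k)"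
    unfolding expect_def nn_integral_indicator_inj_image[OF \<open>inj ?K\<close>] using assms by simp
  finally show ?thesis .
qed

lemma expect_msample_le:
  "expect (msample \<sigma> x d) g \<le> (\<integral>\<^sup>+ i. g (Fin (\<sigma>(x := i))) \<partial>measure_pmf (d \<sigma>))"
proof -
  let ?K = "\<lambda>i. (pmf (d \<sigma>) i, Fin (\<sigma>(x := i)))"
  let ?A = "{i. 0 < pmf (d \<sigma>) i}"
  have "inj_on ?K ?A"
    by (rule inj_onI) (metis conf.inject(2) fun_upd_same prod.inject)
  have "expect (msample \<sigma> x d) g
      = (\<integral>\<^sup>+ y. (ennreal (fst y) * g (snd y)) * indicator (?K ` ?A) y \<partial>count_space UNIV)"
    unfolding expect_def msample_def
    by (intro nn_integral_cong) (auto simp: indicator_def image_iff)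
  also have "\<dots> = (\<integral>\<^sup>+ i. ennreal (pmf (d \<sigma>) i) * g (Fin (\<sigma>(x := i))) * indicator ?A i \<partial>count_space UNIV)"
    by (simp add: nn_integral_indicator_inj_image[OF \<open>inj_on ?K ?A\<close>] nn_integral_count_space_indicator)
  also have "\<dots> \<le> (\<integral>\<^sup>+ i. ennreal (pmf (d \<sigma>) i) * g (Fin (\<sigma>(x := i))) \<partial>count_space UNIV)"
    by (intro nn_integral_mono) (auto simp: indicator_def)
  finally show ?thesis
    by (simp add: nn_integral_measure_pmf)
qed

lemma of_nat_munion_eq:
  assumes "finite {i \<in> I. F i x \<noteq> 0}"
  shows "(of_nat (munion I F x) :: ennreal) = (\<integral>\<^sup>+ i. of_nat (F i x) \<partial>count_space I)"
  using assms unfolding munion_def by (subst nn_integral_count_space') auto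

lemma of_nat_munion_le:
  "(of_nat (munion I F x) :: ennreal) \<le> (\<integral>\<^sup>+ i. of_nat (F i x) \<partial>count_space I)"
proof (cases "finite {i \<in> I. F i x \<noteq> 0}")
  case True
  then show ?thesis by (simp add: of_nat_munion_eq)
qed (simp add: munion_def) \<comment> \<open>infinite support: \<open>munion\<close> takes the junk value 0 of \<open>sum\<close>\<close>

lemma expect_munion_le:
  "expect (munion I F) g \<le> (\<integral>\<^sup>+ i. expect (F i) g \<partial>count_space I)"
proof -
  have "expect (munion I F) g \<le> (\<integral>\<^sup>+ x. ennreal (fst x) * (\<integral>\<^sup>+ i. of_nat (F i x) \<partial>count_space I) * g (snd x) \<partial>count_space UNIV)"
    unfolding expect_def
    by (intro nn_integral_mono mult_right_mono mult_left_mono of_nat_munion_le) auto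
  also have "\<dots> = (\<integral>\<^sup>+ i. expect (F i) g \<partial>count_space I)"
    unfolding expect_def
    by (simp add: nn_integral_cmult nn_integral_multc nn_integral_count_space_nat_swap[symmetric])
  finally show ?thesis .
qed

lemma expect_munion_eq:
  assumes "\<And>x. finite {i \<in> I. F i x \<noteq> 0}"
  shows "expect (munion I F) g = (\<integral>\<^sup>+ i. expect (F i) g \<partial>count_space I)"
  unfolding expect_def
  by (simp add: of_nat_munion_eq[OF assms] nn_integral_cmult nn_integral_multc
      nn_integral_count_space_nat_swap[symmetric])

lemma weight_le_total:
  assumes "i \<in> I"
  shows "ennreal (p i) \<le> (\<integral>\<^sup>+ j. ennreal (p j) \<partial>count_space I)"
proof -
  have "ennreal (p i) = (\<integral>\<^sup>+ j. ennreal (p j) * indicator {i} j \<partial>count_space I)"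
    using assms by simp
  also have "\<dots> \<le> (\<integral>\<^sup>+ j. ennreal (p j) \<partial>count_space I)"
    by (intro nn_integral_mono) (simp add: indicator_def)
  finally show ?thesis .
qed

lemma finite_weights_ge:
  assumes "(\<integral>\<^sup>+ i. ennreal (p i) \<partial>count_space I) \<le> 1" and "0 < q"
  shows "finite {i \<in> I. q \<le> p i}"
proof (rule ccontr)
  let ?S = "{i \<in> I. q \<le> p i}"
  assume "infinite ?S"
  then have "\<infinity> = ennreal q * emeasure (count_space I) ?S"
    using \<open>0 < q\<close> by (simp add: ennreal_mult_top)
  also have "\<dots> = (\<integral>\<^sup>+ i. ennreal q * indicator ?S i \<partial>count_space I)"
    by (simp add: nn_integral_cmult_indicator)
  also have "\<dots> \<le> (\<integral>\<^sup>+ i. ennreal (p i) \<partial>count_space I)"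
    by (intro nn_integral_mono) (auto simp: indicator_def ennreal_leI)
  also have "\<dots> \<le> 1"
    by (fact assms(1))
  finally show False by (simp add: top_unique)
qed

definition unit_weights :: "'a mdist \<Rightarrow> bool" where
  "unit_weights \<mu> \<longleftrightarrow> (\<forall>x. \<mu> x \<noteq> 0 \<longrightarrow> 0 < fst x \<and> fst x \<le> 1)"

lemma mscale_nonzero_weight:
  assumes "unit_weights \<mu>" "0 < p" "mscale p \<mu> x \<noteq> 0"
  shows "0 < fst x \<and> fst x \<le> p"
proof -
  have "0 < fst x / p \<and> fst x / p \<le> 1"
    using assms(1,3) unfolding unit_weights_def mscale_def by (metis fst_conv snd_conv)
  with \<open>0 < p\<close> show ?thesis
    by (simp add: zero_less_divide_iff divide_le_eq_1_pos)
qed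

lemma finite_munion_support:
  assumes "\<forall>i\<in>I. unit_weights (\<mu> i)" "\<forall>i\<in>I. 0 < p i"
    and "(\<integral>\<^sup>+ i. ennreal (p i) \<partial>count_space I) \<le> 1"
  shows "finite {i \<in> I. mscale (p i) (\<mu> i) x \<noteq> 0}"
proof (cases "0 < fst x")
  case True
  have "{i \<in> I. mscale (p i) (\<mu> i) x \<noteq> 0} \<subseteq> {i \<in> I. fst x \<le> p i}"
    using assms(1,2) mscale_nonzero_weight by blast
  then show ?thesis
    using finite_weights_ge[OF assms(3) True] by (rule finite_subset)
next
  case False
  then have "{i \<in> I. mscale (p i) (\<mu> i) x \<noteq> 0} = {}"
    using assms(1,2) mscale_nonzero_weight by fastforce
  then show ?thesis by (metis finite.emptyI)
qed

lemma lstep_unit_weights: "lstep \<mu> w \<nu> \<Longrightarrow> unit_weights \<mu>"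
proof (induction rule: lstep.induct)
  case (refl \<mu>)
  then show ?case unfolding unit_weights_def is_mdist_def by auto
next
  case (single \<gamma> w \<mu>)
  show ?case unfolding unit_weights_def mpoint_def by auto
next
  case (union I \<mu> w \<nu> p)
  show ?case unfolding unit_weights_def
  proof (intro allI impI)
    fix x
    assume "munion I (\<lambda>i. mscale (p i) (\<mu> i)) x \<noteq> 0"
    then obtain i where i: "i \<in> I" "mscale (p i) (\<mu> i) x \<noteq> 0"
      unfolding munion_def by (metis (no_types, lifting) mem_Collect_eq sum.neutral)
    have "p i \<le> 1"
      using weight_le_total[OF i(1), of p] union.hyps(2) by (metis ennreal_le_1 order_trans)
    with mscale_nonzero_weight[OF _ _ i(2)] i(1) union show "0 < fst x \<and> fst x \<le> 1"
      by fastforce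
  qed
qed

lemma kappa_inj: "inj (kappa D)"
proof (rule injI)
  fix a b
  assume "kappa D a = kappa D b"
  moreover have "Seq C' D \<noteq> D" for C'
    using arg_cong[of "Seq C' D" D size] by auto
  ultimately show "a = b"
    by (cases a; cases b) (auto dest: sym)
qed

fun et_conf :: "bool \<Rightarrow> 'v expec \<Rightarrow> 'v conf \<Rightarrow> ennreal" where
  "et_conf c h (Act C \<sigma>) = et c C h \<sigma>"
| "et_conf c h (Fin \<sigma>) = h \<sigma>"
| "et_conf c h Bot = 0"

lemma et_conf_kappa: "et_conf c h \<circ> kappa D = et_conf c (et c D h)"
proof
  fix \<gamma>
  show "(et_conf c h \<circ> kappa D) \<gamma> = et_conf c (et c D h) \<gamma>"
    by (cases \<gamma>) auto
qed

lemma step_et_conf: "step \<gamma> w \<mu> \<Longrightarrow> ind c * w + expect \<mu> (et_conf c h) \<le> et_conf c h \<gamma>"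
proof (induction arbitrary: h rule: step.induct)
  case (sample x d \<sigma>)
  show ?case
    using expect_msample_le[of \<sigma> x d "et_conf c h"] by simp
next
  case (while_t psi \<sigma> phi C)
  then show ?case
    by (subst et_conf.simps(1), subst et_While_unfold) (simp add: expect_mpoint ind_def)
next
  case (while_f psi \<sigma> phi C)
  then show ?case
    by (subst et_conf.simps(1), subst et_While_unfold) (simp add: expect_mpoint ind_def)
next
  case (pchoice C p D \<sigma>)
  show ?case
    using expect_mpoint_le[of p "Act C \<sigma>" "et_conf c h"]
      expect_mpoint_le[of "1 - p" "Act D \<sigma>" "et_conf c h"]
    by (simp add: expect_madd add_mono)
next
  case (seq C \<sigma> r \<mu> D)
  then show ?case
    by (simp add: expect_mmap[OF kappa_inj] et_conf_kappa)
qed (auto simp: expect_mpoint ind_def)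

lemma lstep_et_conf: "lstep \<mu> w \<nu> \<Longrightarrow> ind c * w + expect \<nu> (et_conf c h) \<le> expect \<mu> (et_conf c h)"
proof (induction rule: lstep.induct)
  case (refl \<mu>)
  then show ?case by simp
next
  case (single \<gamma> w \<mu>)
  then show ?case using step_et_conf[OF single] by (simp add: expect_mpoint)
next
  case (union I \<mu> w \<nu> p)
  let ?g = "et_conf c h"
  have support: "finite {i \<in> I. mscale (p i) (\<mu> i) x \<noteq> 0}" for x
    using union lstep_unit_weights by (intro finite_munion_support) blast+
  have "ind c * (\<integral>\<^sup>+ i. ennreal (p i) * w i \<partial>count_space I) + expect (munion I (\<lambda>i. mscale (p i) (\<nu> i))) ?g
      \<le> (\<integral>\<^sup>+ i. ind c * (ennreal (p i) * w i) \<partial>count_space I) + (\<integral>\<^sup>+ i. expect (mscale (p i) (\<nu> i)) ?g \<partial>count_space I)"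
    by (simp add: nn_integral_cmult add_left_mono expect_munion_le)
  also have "\<dots> = (\<integral>\<^sup>+ i. ennreal (p i) * (ind c * w i + expect (\<nu> i) ?g) \<partial>count_space I)"
    using union.hyps(1)
    by (subst nn_integral_add[symmetric])
      (auto intro!: nn_integral_cong simp: expect_mscale distrib_left mult.left_commute)
  also have "\<dots> \<le> (\<integral>\<^sup>+ i. ennreal (p i) * expect (\<mu> i) ?g \<partial>count_space I)"
    using union.IH by (intro nn_integral_mono mult_left_mono) auto
  also have "\<dots> = expect (munion I (\<lambda>i. mscale (p i) (\<mu> i))) ?g"
    unfolding expect_munion_eq[OF support] using union.hyps(1)
    by (intro nn_integral_cong) (simp add: expect_mscale)
  finally show ?case .
qed

lemma msteps_et_conf: "msteps \<mu> w \<nu> \<Longrightarrow> ind c * w + expect \<nu> (et_conf c h) \<le> expect \<mu> (et_conf c h)"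
proof (induction rule: msteps.induct)
  case (refl \<mu>)
  then show ?case by simp
next
  case (single \<mu> w \<nu>)
  then show ?case by (rule lstep_et_conf)
next
  case (trans \<mu> w1 \<mu>' w2 \<nu>)
  have "ind c * (w1 + w2) + expect \<nu> (et_conf c h) = ind c * w1 + (ind c * w2 + expect \<nu> (et_conf c h))"
    by (simp add: distrib_left add.assoc)
  also have "\<dots> \<le> ind c * w1 + expect \<mu>' (et_conf c h)"
    using trans.IH(2) by (rule add_left_mono)
  also have "\<dots> \<le> expect \<mu> (et_conf c h)"
    by (fact trans.IH(1))
  finally show ?case .
qed

lemma msteps_from_Act_le_et:
  assumes "msteps (mpoint 1 (Act C \<sigma>)) w \<mu>"
  shows "ind c * w + expect \<mu> (et_conf c h) \<le> et c C h \<sigma>"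
  using msteps_et_conf[OF assms, of c h] by (simp add: expect_mpoint)

lemma ec_le_ect: "ec C \<sigma> \<le> ect C (\<lambda>_. 0) \<sigma>"
  unfolding ec_def
proof (rule Sup_least)
  fix w
  assume "w \<in> {w. \<exists>\<mu>. msteps (mpoint 1 (Act C \<sigma>)) w \<mu>}"
  then obtain \<mu> where "msteps (mpoint 1 (Act C \<sigma>)) w \<mu>" by blast
  from msteps_from_Act_le_et[OF this, of True "\<lambda>_. 0"]
  show "w \<le> ect C (\<lambda>_. 0) \<sigma>"
    unfolding ect_def ind_def by (metis add_increasing2 mult_1 order_refl order_trans zero_le)
qed

lemma expect_restrict_Fin_le:
  "expect (restrict_md \<mu> (range Fin)) (\<lambda>\<gamma>. case \<gamma> of Fin \<tau> \<Rightarrow> f \<tau> | _ \<Rightarrow> 0) \<le> expect \<mu> (et_conf c f)"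
  unfolding expect_def restrict_md_def
  by (intro nn_integral_mono) (auto split: conf.split)

lemma ev_le_evt: "ev C \<sigma> f \<le> evt C f \<sigma>"
  unfolding ev_def
proof (rule Sup_least)
  fix e
  assume "e \<in> {expect (restrict_md \<mu> (range Fin)) (\<lambda>\<gamma>. case \<gamma> of Fin \<tau> \<Rightarrow> f \<tau> | _ \<Rightarrow> 0)
                 | \<mu>. \<exists>w. msteps (mpoint 1 (Act C \<sigma>)) w \<mu>}"
  then obtain \<mu> w where e: "e = expect (restrict_md \<mu> (range Fin)) (\<lambda>\<gamma>. case \<gamma> of Fin \<tau> \<Rightarrow> f \<tau> | _ \<Rightarrow> 0)"
    and "msteps (mpoint 1 (Act C \<sigma>)) w \<mu>" by blast
  from msteps_from_Act_le_et[OF this(2), of False f]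
  have "expect \<mu> (et_conf False f) \<le> evt C f \<sigma>"
    unfolding evt_def ind_def by simp
  with expect_restrict_Fin_le show "e \<le> evt C f \<sigma>"
    unfolding e by (rule order_trans)
qed

theorem mainTheorem6:
  fixes C :: "'v::finite cmd" and \<sigma> :: "'v store" and f :: "'v expec"
  assumes "wf_cmd C"
  shows "ec C \<sigma> \<le> ect C (\<lambda>_. 0) \<sigma> \<and> ev C \<sigma> f \<le> evt C f \<sigma>"
  using ec_le_ect ev_le_evt by blast

end
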